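(* Consider the random basic walk on the integer lattice $\mathbb{Z}^2$ (vertices $\mathbb{Z}^2$, edges between points at Euclidean distance $1$). For any starting vertex and any initial port, the random basic walk cycles with probability $1$.
   Context: Graphs are connected, countable and locally finite; each undirected edge $\{v,w\}$ is regarded as two arcs $v\to w$ and $w\to v$. A labeling assigns, at each vertex $v$ of degree $\deg(v)$, the port numbers $1,\dots,\deg(v)$ bijectively to the arcs leaving $v$ (labels on $v\to w$ and $w\to v$ need not agree). In a random labeling these bijections are chosen uniformly at random, independently for different vertices. Given a labeling, a starting vertex $v_0$ and an initial port $\ell$, the basic walk leaves $v_0$ along the arc labeled $\ell$; thereafter, whenever it enters a vertex $v$ along an arc whose label (at the tail of that arc) is $i$, it leaves $v$ along the arc out of $v$ labeled $(i \bmod \deg(v))+1$. The random basic walk is the basic walk for a random labeling. The walk cycles if some arc is traversed twice in the same direction (equivalently, from some point on the walk is periodic and visits only finitely many vertices); it is transient if it does not cycle, i.e. it visits infinitely many vertices, each only finitely often. *)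

theory Defs
  imports "HOL-Probability.Probability"
begin

type_synonym vertex = "int \<times> int"

definition nbrs :: "vertex \<Rightarrow> vertex set" where
  "nbrs v = {w. (fst w - fst v)^2 + (snd w - snd v)^2 = 1}"

definition deg :: "vertex \<Rightarrow> nat" where
  "deg v = card (nbrs v)"

text \<open>A labeling L assigns to the arc v -> w the port number L v w (at its tail v).\<close>
definition local_labelings :: "vertex \<Rightarrow> (vertex \<Rightarrow> nat) set" where
  "local_labelings v =
     {f. bij_betw f (nbrs v) {1..deg v} \<and> (\<forall>w. w \<notin> nbrs v \<longrightarrow> f w = 0)}"

definition random_labeling :: "(vertex \<Rightarrow> vertex \<Rightarrow> nat) measure" where
  "random_labeling = PiM UNIV (\<lambda>v. measure_pmf (pmf_of_set (local_labelings v)))"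

primrec basic_walk :: "(vertex \<Rightarrow> vertex \<Rightarrow> nat) \<Rightarrow> vertex \<Rightarrow> nat \<Rightarrow> nat \<Rightarrow> vertex \<times> vertex" where
  "basic_walk L v0 l 0 = (v0, THE w. w \<in> nbrs v0 \<and> L v0 w = l)"
| "basic_walk L v0 l (Suc n) =
     (case basic_walk L v0 l n of (v, w) \<Rightarrow>
        (w, THE u. u \<in> nbrs w \<and> L w u = (L v w mod deg w) + 1))"

definition walk_cycles :: "(vertex \<Rightarrow> vertex \<Rightarrow> nat) \<Rightarrow> vertex \<Rightarrow> nat \<Rightarrow> bool" where
  "walk_cycles L v0 l \<longleftrightarrow> (\<exists>m n. m < n \<and> basic_walk L v0 l m = basic_walk L v0 l n)"

end

theory Submission
  imports Defs "HOL-Number_Theory.Cong"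
begin

text \<open>On the 4-regular lattice the walk leaves its \<open>t\<close>-th vertex through port
  \<open>l + t (mod 4)\<close>; hence it cycles iff some arc is traversed twice, and if it does not
  cycle it visits infinitely many vertices. Consider the labelings under which, before time
  \<open>B\<close> and with no arc repeated, the walk enters a new vertex \<open>v\<close> after having visited \<open>k\<close>
  vertices. Relabelling \<open>v\<close> and the vertex straight ahead of \<open>v\<close> forces an arc to repeat
  within four further steps without changing the walk up to \<open>v\<close>; since only two local
  labelings change, this map is at most \<open>257\<^sup>2\<close>-to-one, so at least a fraction
  \<open>1/257\<^sup>2\<close> of these labelings repeat an arc in the next four steps. A walk that reaches
  \<open>k + 4\<close> vertices without repeating an arc does not, so the probability of reaching
  \<open>4j + 1\<close> vertices without repeating an arc is at most \<open>(1 - 1/257\<^sup>2)\<^sup>j\<close>, uniformly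
  in \<open>B\<close>. Letting \<open>j \<rightarrow> \<infinity>\<close>, the walk cycles almost surely.\<close>

type_synonym labeling = "vertex \<Rightarrow> vertex \<Rightarrow> nat"

section \<open>The square lattice\<close>

lemma int_sum_squares_eq_1:
  fixes a b :: int
  assumes "a^2 + b^2 = 1"
  shows "(a = 1 \<and> b = 0) \<or> (a = -1 \<and> b = 0) \<or> (a = 0 \<and> b = 1) \<or> (a = 0 \<and> b = -1)"
proof -
  have "a^2 \<le> 1" "b^2 \<le> 1" using assms by (smt (verit) zero_le_power2)+
  then have "\<bar>a\<bar> \<le> 1" "\<bar>b\<bar> \<le> 1" by (simp_all add: abs_square_le_1)
  then have "a \<in> {-1,0,1}" "b \<in> {-1,0,1}" by auto
  then show ?thesis using assms by auto
qed

lemma nbrs_Pair: "nbrs (a,b) = {(a+1,b), (a-1,b), (a,b+1), (a,b-1)}"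
proof (intro set_eqI iffI)
  fix w assume "w \<in> nbrs (a,b)"
  then have "(fst w - a)^2 + (snd w - b)^2 = 1" by (simp add: nbrs_def)
  from int_sum_squares_eq_1[OF this] show "w \<in> {(a+1,b), (a-1,b), (a,b+1), (a,b-1)}"
    by (cases w) auto
qed (auto simp: nbrs_def)

lemma deg_eq_4: "deg v = 4"
  by (cases v) (simp add: deg_def nbrs_Pair)

lemma finite_nbrs: "finite (nbrs v)"
  by (cases v) (simp add: nbrs_Pair)

lemma nbrs_sym: "w \<in> nbrs v \<Longrightarrow> v \<in> nbrs w"
  by (auto simp: nbrs_def power2_commute)

lemma nbr_neq: "w \<in> nbrs v \<Longrightarrow> w \<noteq> v"
  by (auto simp: nbrs_def)

definition square :: "vertex \<Rightarrow> int \<Rightarrow> vertex set" where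
  "square c R = {v. \<bar>fst v - fst c\<bar> \<le> R \<and> \<bar>snd v - snd c\<bar> \<le> R}"

lemma finite_square: "finite (square c R)"
proof -
  have "square c R \<subseteq> {fst c - R..fst c + R} \<times> {snd c - R..snd c + R}"
    unfolding square_def by (auto simp: abs_le_iff)
  then show ?thesis by (rule finite_subset) simp
qed

lemma square_mono: "R \<le> R' \<Longrightarrow> square c R \<subseteq> square c R'"
  unfolding square_def by auto

lemma nbr_in_square: "x \<in> square c R \<Longrightarrow> y \<in> nbrs x \<Longrightarrow> y \<in> square c (R + 1)"
  by (cases x) (auto simp: nbrs_Pair square_def)

definition straight :: "vertex \<Rightarrow> vertex \<Rightarrow> vertex" where
  "straight u v = (2 * fst v - fst u, 2 * snd v - snd u)"

definition turn_left :: "vertex \<Rightarrow> vertex \<Rightarrow> vertex" where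
  "turn_left u v = (fst v - (snd v - snd u), snd v + (fst v - fst u))"

definition turn_right :: "vertex \<Rightarrow> vertex \<Rightarrow> vertex" where
  "turn_right u v = (fst v + (snd v - snd u), snd v - (fst v - fst u))"

lemma nbrs_by_direction:
  assumes "u \<in> nbrs v"
  shows "nbrs v = {straight u v, u, turn_left u v, turn_right u v}"
    and "distinct [straight u v, u, turn_left u v, turn_right u v]"
proof -
  obtain a b where v: "v = (a,b)" by (cases v)
  have "u = (a+1,b) \<or> u = (a-1,b) \<or> u = (a,b+1) \<or> u = (a,b-1)"
    using assms by (simp add: v nbrs_Pair)
  then have "nbrs v = {straight u v, u, turn_left u v, turn_right u v}
      \<and> distinct [straight u v, u, turn_left u v, turn_right u v]"
    by (elim disjE) (auto simp: v straight_def turn_left_def turn_right_def nbrs_Pair)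
  then show "nbrs v = {straight u v, u, turn_left u v, turn_right u v}"
    and "distinct [straight u v, u, turn_left u v, turn_right u v]" by simp_all
qed

section \<open>Local labelings\<close>

lemma local_labelingsD:
  assumes "f \<in> local_labelings v"
  shows local_labelings_bij: "bij_betw f (nbrs v) {1..4}"
    and local_labelings_outside: "w \<notin> nbrs v \<Longrightarrow> f w = 0"
  using assms unfolding local_labelings_def deg_eq_4 by blast+

lemma local_labelingsI:
  "bij_betw f (nbrs v) {1..4} \<Longrightarrow> (\<And>w. w \<notin> nbrs v \<Longrightarrow> f w = 0) \<Longrightarrow> f \<in> local_labelings v"
  by (simp add: local_labelings_def deg_eq_4)

lemma local_labeling_range: "f \<in> local_labelings v \<Longrightarrow> w \<in> nbrs v \<Longrightarrow> f w \<in> {1..4}"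
  by (rule bij_betw_apply[OF local_labelings_bij])

lemma local_labeling_surj:
  "f \<in> local_labelings v \<Longrightarrow> p \<in> {1..4} \<Longrightarrow> \<exists>w\<in>nbrs v. f w = p"
  by (metis bij_betw_imp_surj_on imageE local_labelings_bij)

lemma local_labeling_inj:
  "f \<in> local_labelings v \<Longrightarrow> w \<in> nbrs v \<Longrightarrow> w' \<in> nbrs v \<Longrightarrow> f w = f w' \<Longrightarrow> w = w'"
  by (metis bij_betw_imp_inj_on inj_onD local_labelings_bij)

lemma local_labelings_enum:
  assumes "nbrs v = {y1, y2, y3, y4}" "distinct [y1, y2, y3, y4]"
    and "{p1, p2, p3, p4} = {1..4::nat}" "distinct [p1, p2, p3, p4]"
  shows "(\<lambda>y. if y = y1 then p1 else if y = y2 then p2 else if y = y3 then p3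
             else if y = y4 then p4 else 0) \<in> local_labelings v"
    (is "?f \<in> _")
proof (rule local_labelingsI)
  have map: "map ?f [y1, y2, y3, y4] = [p1, p2, p3, p4]" using assms(2) by auto
  have "distinct (map ?f [y1, y2, y3, y4])" using assms(4) by (simp only: map)
  then have "inj_on ?f (set [y1, y2, y3, y4])" by (simp only: distinct_map)
  moreover have "?f ` set [y1, y2, y3, y4] = set [p1, p2, p3, p4]"
    by (simp only: list.set_map[symmetric] map)
  ultimately show "bij_betw ?f (nbrs v) {1..4}"
    using assms(1,3) by (simp only: bij_betw_def list.set)
qed (use assms(1) in auto)

lemma local_labelings_swap:
  assumes f: "f \<in> local_labelings x" and "a \<in> nbrs x" "b \<in> nbrs x"
  shows "(\<lambda>y. if y = a then f b else if y = b then f a else f y) \<in> local_labelings x"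
proof -
  define \<tau> where "\<tau> = Transposition.transpose a b"
  have "bij_betw \<tau> (nbrs x) (nbrs x)"
    unfolding \<tau>_def using assms(2,3) by (intro bij_betw_transpose_iff) simp
  then have "bij_betw (f \<circ> \<tau>) (nbrs x) {1..4}"
    using local_labelings_bij[OF f] by (rule bij_betw_trans)
  moreover have "f (\<tau> w) = 0" if "w \<notin> nbrs x" for w
  proof -
    have "w \<noteq> a" "w \<noteq> b" using that assms(2,3) by auto
    then have "\<tau> w = w" by (simp add: \<tau>_def)
    then show ?thesis using local_labelings_outside[OF f that] by simp
  qed
  ultimately have "f \<circ> \<tau> \<in> local_labelings x" by (intro local_labelingsI) simp_all
  moreover have "f \<circ> \<tau> = (\<lambda>y. if y = a then f b else if y = b then f a else f y)"
    by (auto simp: \<tau>_def)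
  ultimately show ?thesis by simp
qed

lemma local_labelings_restrict:
  assumes "f \<in> local_labelings v"
  shows "restrict f (nbrs v) \<in> nbrs v \<rightarrow>\<^sub>E {1..4}"
  using local_labeling_range[OF assms] by (intro PiE_I) simp_all

lemma inj_on_restrict_local_labelings:
  "inj_on (\<lambda>f. restrict f (nbrs v)) (local_labelings v)"
  by (rule inj_onI) (metis ext local_labelings_outside restrict_apply')

lemma
  shows finite_local_labelings: "finite (local_labelings v)"
    and card_local_labelings_le: "card (local_labelings v) \<le> 256"
proof -
  let ?r = "\<lambda>f. restrict f (nbrs v)"
  have sub: "?r ` local_labelings v \<subseteq> nbrs v \<rightarrow>\<^sub>E {1..4::nat}"
    using local_labelings_restrict by blast
  have fin: "finite (nbrs v \<rightarrow>\<^sub>E {1..4::nat})" by (simp add: finite_PiE finite_nbrs)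
  show "finite (local_labelings v)"
    using finite_subset[OF sub fin] inj_on_restrict_local_labelings finite_imageD by blast
  have "card (local_labelings v) = card (?r ` local_labelings v)"
    using inj_on_restrict_local_labelings by (simp add: card_image)
  also have "\<dots> \<le> card (nbrs v \<rightarrow>\<^sub>E {1..4::nat})" by (rule card_mono[OF fin sub])
  also have "\<dots> = 256" by (simp add: card_PiE finite_nbrs deg_eq_4[unfolded deg_def])
  finally show "card (local_labelings v) \<le> 256" .
qed

lemma local_labelings_nonempty: "local_labelings v \<noteq> {}"
proof (cases v)
  case (Pair a b)
  have "{1, 2, 3, 4} = {1..4::nat}" by auto
  then have "(\<lambda>y. if y = (a+1,b) then 1 else if y = (a-1,b) then 2 else if y = (a,b+1) then 3
      else if y = (a,b-1) then 4 else 0::nat) \<in> local_labelings v"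
    by (intro local_labelings_enum) (simp_all add: Pair nbrs_Pair)
  then show ?thesis by blast
qed

section \<open>Ports and exits\<close>

text \<open>As every vertex has degree 4, the exit port increases by one, cyclically, at each step
  of the basic walk.\<close>

definition port :: "nat \<Rightarrow> nat \<Rightarrow> nat" where
  "port l t = (l - 1 + t) mod 4 + 1"

lemma port_range: "port l t \<in> {1..4}"
  by (simp add: port_def)

lemma port_Suc: "port l t mod 4 + 1 = port l (Suc t)"
  by (simp add: port_def mod_Suc_eq)

lemma port_0: "l \<in> {1..4} \<Longrightarrow> port l 0 = l"
  unfolding port_def by (subst mod_less) auto

lemma port_eq_iff: "port l s = port l t \<longleftrightarrow> s mod 4 = t mod 4"
  using cong_add_lcancel_nat[of "l - 1" s t 4] by (simp add: port_def cong_def)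

lemma port_add_eq_iff: "port l (t + i) = port l (t + j) \<longleftrightarrow> i mod 4 = j mod 4"
  using cong_add_lcancel_nat[of t i j 4] by (simp add: port_eq_iff cong_def)

lemma ports_four:
  "{port l t, port l (t+2), port l (t+1), port l (t+3)} = {1..4}"
  "distinct [port l t, port l (t+2), port l (t+1), port l (t+3)]"
proof -
  show d: "distinct [port l t, port l (t+2), port l (t+1), port l (t+3)]"
    using port_add_eq_iff[of l t 0 2] port_add_eq_iff[of l t 0 1] port_add_eq_iff[of l t 0 3]
      port_add_eq_iff[of l t 2 1] port_add_eq_iff[of l t 2 3] port_add_eq_iff[of l t 1 3]
    by auto
  have "{port l t, port l (t+2), port l (t+1), port l (t+3)} \<subseteq> {1..4}"
    using port_range by simp
  moreover have "card {port l t, port l (t+2), port l (t+1), port l (t+3)} = card {1..4::nat}"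
    using distinct_card[OF d] by simp
  ultimately show "{port l t, port l (t+2), port l (t+1), port l (t+3)} = {1..4}"
    by (intro card_subset_eq) simp_all
qed

definition out_nbr :: "labeling \<Rightarrow> vertex \<Rightarrow> nat \<Rightarrow> vertex" where
  "out_nbr L x p = (THE w. w \<in> nbrs x \<and> L x w = p)"

lemma out_nbr_eqI:
  assumes "L x \<in> local_labelings x" "y \<in> nbrs x" "L x y = p"
  shows "out_nbr L x p = y"
  unfolding out_nbr_def using assms local_labeling_inj[OF assms(1)] by blast

lemma
  assumes "L x \<in> local_labelings x" "p \<in> {1..4}"
  shows out_nbr_in_nbrs: "out_nbr L x p \<in> nbrs x"
    and label_out_nbr: "L x (out_nbr L x p) = p"
  using local_labeling_surj[OF assms] out_nbr_eqI[of L x] assms(1) by auto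

lemma out_nbr_cong: "L' x = L x \<Longrightarrow> out_nbr L' x p = out_nbr L x p"
  by (simp add: out_nbr_def)

lemma card_le_mult_card_image:
  assumes "finite A" "\<And>y. y \<in> f ` A \<Longrightarrow> card {x \<in> A. f x = y} \<le> n"
  shows "card A \<le> n * card (f ` A)"
proof -
  have "card A = card (\<Union>y\<in>f ` A. {x \<in> A. f x = y})" by (rule arg_cong[where f = card]) blast
  also have "\<dots> \<le> (\<Sum>y\<in>f ` A. card {x \<in> A. f x = y})"
    using assms(1) by (intro card_UN_le) simp
  also have "\<dots> \<le> (\<Sum>y\<in>f ` A. n)" by (rule sum_mono) (rule assms(2))
  finally show ?thesis by (simp add: mult.commute)
qed

text \<open>Outside \<open>J\<close> the members of \<open>PiE J S\<close> are \<open>undefined\<close>, which accounts for the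
  \<open>Suc\<close>.\<close>

lemma card_PiE_agree_off2_le:
  assumes "finite (S a)" "finite (S b)"
  shows "card {f \<in> PiE J S. \<forall>x. x \<noteq> a \<longrightarrow> x \<noteq> b \<longrightarrow> f x = h x}
           \<le> Suc (card (S a)) * Suc (card (S b))"
proof -
  let ?G = "{f \<in> PiE J S. \<forall>x. x \<noteq> a \<longrightarrow> x \<noteq> b \<longrightarrow> f x = h x}"
  let ?P = "insert undefined (S a) \<times> insert undefined (S b)"
  have "?G \<subseteq> (\<lambda>(p, q). h(a := p, b := q)) ` ?P"
  proof
    fix f assume f: "f \<in> ?G"
    have mem: "f c \<in> insert undefined (S c)" for c
      using f PiE_mem[of f J S c] PiE_arb[of f J S c] by (cases "c \<in> J") simp_all
    show "f \<in> (\<lambda>(p, q). h(a := p, b := q)) ` ?P"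
    proof (rule image_eqI)
      show "f = (\<lambda>(p, q). h(a := p, b := q)) (f a, f b)" using f by (auto simp: fun_eq_iff)
      show "(f a, f b) \<in> ?P" using mem[of a] mem[of b] by (rule SigmaI)
    qed
  qed
  moreover have "finite ?P" using assms by simp
  ultimately have "card ?G \<le> card ((\<lambda>(p, q). h(a := p, b := q)) ` ?P)"
    by (intro card_mono finite_imageI)
  also have "\<dots> \<le> card ?P" using \<open>finite ?P\<close> by (rule card_image_le)
  also have "\<dots> = card (insert undefined (S a)) * card (insert undefined (S b))"
    by (rule card_cartesian_product)
  also have "\<dots> \<le> Suc (card (S a)) * Suc (card (S b))"
    using assms by (intro mult_le_mono) (simp_all add: card_insert_if)
  finally show ?thesis .
qed

section \<open>The walk\<close>

locale lattice_walk =
  fixes v0 :: vertex and l :: nat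
begin

primrec pos :: "labeling \<Rightarrow> nat \<Rightarrow> vertex" where
  "pos L 0 = v0"
| "pos L (Suc t) = out_nbr L (pos L t) (port l t)"

definition arc :: "labeling \<Rightarrow> nat \<Rightarrow> vertex \<times> vertex" where
  "arc L t = (pos L t, pos L (Suc t))"

definition arcs_distinct :: "labeling \<Rightarrow> nat \<Rightarrow> bool" where
  "arcs_distinct L n \<longleftrightarrow> (\<forall>m m'. m < m' \<longrightarrow> m' \<le> n \<longrightarrow> arc L m \<noteq> arc L m')"

definition new_at :: "labeling \<Rightarrow> nat \<Rightarrow> bool" where
  "new_at L t \<longleftrightarrow> pos L t \<notin> pos L ` {..<t}"

definition visited :: "labeling \<Rightarrow> nat \<Rightarrow> nat" where
  "visited L t = card (pos L ` {..<t})"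

lemma pos_Suc_nbr:
  assumes "L (pos L t) \<in> local_labelings (pos L t)"
  shows "pos L (Suc t) \<in> nbrs (pos L t)" "L (pos L t) (pos L (Suc t)) = port l t"
  using out_nbr_in_nbrs[of L "pos L t", OF assms port_range] label_out_nbr[of L "pos L t", OF assms port_range]
  by simp_all

lemma pos_cong:
  assumes "\<And>s. s < t \<Longrightarrow> out_nbr L' (pos L s) (port l s) = out_nbr L (pos L s) (port l s)"
  shows "s \<le> t \<Longrightarrow> pos L' s = pos L s"
proof (induction s)
  case (Suc s) then show ?case using assms[of s] by simp
qed simp

lemma pos_in_square:
  assumes "\<forall>x\<in>square v0 R. L x \<in> local_labelings x" "int t \<le> R + 1"
  shows "pos L t \<in> square v0 (int t)"
  using assms(2)
proof (induction t)
  case 0 then show ?case by (simp add: square_def)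
next
  case (Suc t)
  then have "pos L t \<in> square v0 (int t)" by simp
  moreover have "square v0 (int t) \<subseteq> square v0 R" using Suc.prems by (intro square_mono) simp
  ultimately have "L (pos L t) \<in> local_labelings (pos L t)" using assms(1) by blast
  then show ?case
    using nbr_in_square[OF \<open>pos L t \<in> square v0 (int t)\<close> pos_Suc_nbr(1)] by (simp add: add.commute)
qed

lemma basic_walk_eq_arc:
  assumes "\<And>x. L x \<in> local_labelings x" "l \<in> {1..4}"
  shows "basic_walk L v0 l t = arc L t"
proof (induction t)
  case 0
  show ?case by (simp add: arc_def out_nbr_def port_0[OF assms(2)])
next
  case (Suc t)
  have "L (pos L t) (pos L (Suc t)) mod deg (pos L (Suc t)) + 1 = port l (Suc t)"
    using pos_Suc_nbr(2)[OF assms(1)] port_Suc[of l t] by (simp add: deg_eq_4)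
  with Suc show ?case by (simp add: arc_def out_nbr_def)
qed

lemma walk_cycles_iff:
  assumes "\<And>x. L x \<in> local_labelings x" "l \<in> {1..4}"
  shows "walk_cycles L v0 l \<longleftrightarrow> \<not> (\<forall>n. arcs_distinct L n)"
  unfolding walk_cycles_def arcs_distinct_def basic_walk_eq_arc[OF assms] by (meson order_refl)

lemma arcs_distinct_mono: "arcs_distinct L n \<Longrightarrow> m \<le> n \<Longrightarrow> arcs_distinct L m"
  unfolding arcs_distinct_def by (meson order_trans)

text \<open>The arc at time \<open>t\<close> is determined by \<open>pos L t\<close> and \<open>t mod 4\<close>.\<close>

lemma infinite_range_pos:
  assumes "\<forall>n. arcs_distinct L n"
  shows "infinite (range (pos L))"
proof
  assume "finite (range (pos L))"
  then have "finite (range (\<lambda>t. (pos L t, t mod 4)))"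
    by (rule finite_subset[rotated, OF finite_SigmaI[of _ "\<lambda>_. {..<4}"]]) auto
  then obtain m n where "m < n" "(pos L m, m mod 4) = (pos L n, n mod 4)"
    by (metis (no_types, lifting) finite_imageD infinite_UNIV_nat inj_on_def linorder_neqE_nat)
  then have "m < n" "arc L m = arc L n" using port_eq_iff[of l m n] by (simp_all add: arc_def)
  then show False using assms unfolding arcs_distinct_def by blast
qed

lemma visited_Suc: "visited L (Suc t) = (if new_at L t then Suc (visited L t) else visited L t)"
  by (simp add: visited_def new_at_def lessThan_Suc card_insert_if)

lemma visited_le_add: "s \<le> t \<Longrightarrow> visited L t \<le> visited L s + (t - s)"
proof (induction t)
  case (Suc t)
  show ?case
  proof (cases "s \<le> t")
    case True
    then show ?thesis using Suc.IH by (auto simp: visited_Suc)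
  next
    case False
    then show ?thesis using Suc.prems by (simp add: le_Suc_eq)
  qed
qed simp

lemma visited_less_if_new_at:
  assumes "s < t" "new_at L s"
  shows "visited L s < visited L t"
proof -
  have "pos L ` {..<s} \<subset> pos L ` {..<t}"
    using assms unfolding new_at_def by (auto intro: image_mono)
  then show ?thesis unfolding visited_def by (intro psubset_card_mono) simp_all
qed

lemma new_at_unique: "new_at L s \<Longrightarrow> new_at L t \<Longrightarrow> visited L s = visited L t \<Longrightarrow> s = t"
  by (metis linorder_neqE_nat visited_less_if_new_at less_irrefl)

lemma visited_unbounded:
  assumes "infinite (range (pos L))"
  shows "\<exists>T. k < visited L T"
proof -
  obtain S where S: "S \<subseteq> range (pos L)" "finite S" "card S = Suc k"
    using infinite_arbitrarily_large[OF assms] by blast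
  obtain C where C: "finite C" "S = pos L ` C"
    using finite_subset_image[OF S(2,1)] by blast
  define T where "T = Suc (Max (insert 0 C))"
  have "S \<subseteq> pos L ` {..<T}" using C by (auto simp: T_def less_Suc_eq_le)
  then have "card S \<le> visited L T" unfolding visited_def by (intro card_mono) simp_all
  then show ?thesis using S(3) by (intro exI[of _ T]) simp
qed

text \<open>Since \<open>visited\<close> grows by at most one per step, every value between 1 and
  \<open>visited L t\<close> is attained at a time when a new vertex is entered.\<close>

lemma new_at_with_visited:
  assumes "1 \<le> k" "k < visited L t"
  shows "\<exists>s<t. 1 \<le> s \<and> new_at L s \<and> visited L s = k"
proof -
  define r where "r = (LEAST r. k < visited L r)"
  have r: "k < visited L r" "r \<le> t"
    unfolding r_def using assms(2) by (auto intro: LeastI Least_le)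
  have before_r: "visited L r' \<le> k" if "r' < r" for r'
    using not_less_Least[of r' "\<lambda>r. k < visited L r"] that unfolding r_def by simp
  have "visited L 0 = 0" "visited L 1 = 1" by (simp_all add: visited_def lessThan_Suc)
  with r(1) assms(1) have "r \<noteq> 0" "r \<noteq> 1" by (intro notI; simp)+
  then obtain s where s: "r = Suc s" "1 \<le> s" by (cases r) auto
  have "visited L s = k" "new_at L s"
    using r(1) before_r[of s] visited_Suc[of L s] s by (auto split: if_splits)
  then show ?thesis using s r(2) by (intro exI[of _ s]) simp
qed

lemma
  assumes "\<And>s. s \<le> n \<Longrightarrow> pos L' s = pos L s"
  shows new_at_cong: "t \<le> n \<Longrightarrow> new_at L' t = new_at L t"
    and visited_cong: "t \<le> n \<Longrightarrow> visited L' t = visited L t"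
    and arcs_distinct_cong: "m < n \<Longrightarrow> arcs_distinct L' m = arcs_distinct L m"
proof -
  have "pos L' ` {..<t} = pos L ` {..<t}" if "t \<le> n" for t
    using that assms by (intro image_cong) auto
  then show "t \<le> n \<Longrightarrow> new_at L' t = new_at L t" "t \<le> n \<Longrightarrow> visited L' t = visited L t"
    using assms by (simp_all add: new_at_def visited_def)
  assume "m < n"
  then have "arc L' a = arc L a" if "a \<le> m" for a
    using that assms[of a] assms[of "Suc a"] by (simp add: arc_def del: pos.simps)
  then have "arc L' a = arc L' b \<longleftrightarrow> arc L a = arc L b" if "a < b" "b \<le> m" for a b
    using that by simp
  then show "arcs_distinct L' m = arcs_distinct L m"
    unfolding arcs_distinct_def by blast
qed

definition discovers :: "nat \<Rightarrow> nat \<Rightarrow> labeling \<Rightarrow> bool" where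
  "discovers k B L \<longleftrightarrow>
     (\<exists>t\<le>B. 1 \<le> t \<and> new_at L t \<and> visited L t = k \<and> arcs_distinct L (t - 1))"

definition discovers_clean :: "nat \<Rightarrow> nat \<Rightarrow> labeling \<Rightarrow> bool" where
  "discovers_clean k B L \<longleftrightarrow>
     (\<exists>t\<le>B. 1 \<le> t \<and> new_at L t \<and> visited L t = k \<and> arcs_distinct L (t + 3))"

lemma discovers_clean_imp_discovers: "discovers_clean k B L \<Longrightarrow> discovers k B L"
  unfolding discovers_def discovers_clean_def
  by (metis arcs_distinct_mono diff_le_self le_add1 order.trans)

lemma discovers_mono: "discovers k B L \<Longrightarrow> B \<le> B' \<Longrightarrow> discovers k B' L"
  unfolding discovers_def by (blast intro: order.trans)

lemma discovers_add_4_imp_clean: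
  assumes "1 \<le> k" "discovers (k + 4) B L"
  shows "discovers_clean k B L"
proof -
  obtain t where t: "t \<le> B" "new_at L t" "visited L t = k + 4" "arcs_distinct L (t - 1)"
    using assms(2) unfolding discovers_def by blast
  obtain s where s: "s < t" "1 \<le> s" "new_at L s" "visited L s = k"
    using new_at_with_visited[OF assms(1), of L t] t(3) by auto
  have "s + 3 \<le> t - 1" using visited_le_add[of s t L] s t(3) by simp
  then show ?thesis unfolding discovers_clean_def
    using s t arcs_distinct_mono[OF t(4)] by (intro exI[of _ s]) simp
qed

lemma discovers_cong:
  assumes "\<And>s. s \<le> B + 4 \<Longrightarrow> pos L' s = pos L s"
  shows "discovers k B L' = discovers k B L"
proof -
  have "(new_at L' t \<and> visited L' t = k \<and> arcs_distinct L' (t - 1))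
      = (new_at L t \<and> visited L t = k \<and> arcs_distinct L (t - 1))" if "t \<le> B" for t
    using that new_at_cong[OF assms] visited_cong[OF assms] arcs_distinct_cong[OF assms] by simp
  then show ?thesis unfolding discovers_def by blast
qed

lemma discovers_if_arcs_distinct:
  assumes "\<forall>n. arcs_distinct L n" "1 \<le> k"
  shows "\<exists>B. discovers k B L"
proof -
  obtain T where "k < visited L T" using visited_unbounded[OF infinite_range_pos[OF assms(1)]] by blast
  then obtain s where "1 \<le> s" "new_at L s" "visited L s = k"
    using new_at_with_visited[OF assms(2)] by blast
  then show ?thesis unfolding discovers_def using assms(1) by blast
qed

section \<open>Switching the labels at a newly discovered vertex\<close>

definition in_phase_before :: "labeling \<Rightarrow> vertex \<Rightarrow> nat \<Rightarrow> bool" where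
  "in_phase_before L w t \<longleftrightarrow> (\<exists>s<t. pos L s = w \<and> s mod 4 = (t + 1) mod 4)"

definition relabel_new :: "vertex \<Rightarrow> vertex \<Rightarrow> nat \<Rightarrow> vertex \<Rightarrow> nat" where
  "relabel_new u v t =
     (\<lambda>y. if y = straight u v then port l t else if y = u then port l (t + 2)
          else if y = turn_left u v then port l (t + 1)
          else if y = turn_right u v then port l (t + 3) else 0)"

definition relabel_ahead :: "labeling \<Rightarrow> vertex \<Rightarrow> vertex \<Rightarrow> nat \<Rightarrow> vertex \<Rightarrow> nat" where
  "relabel_ahead L v w t =
     (if in_phase_before L w t then L w
      else let d = out_nbr L w (port l (t + 1)) in
        (\<lambda>y. if y = v then L w d else if y = d then L w v else L w y))"

text \<open>Relabel the vertex \<open>v\<close> entered from \<open>u\<close> at time \<open>t\<close> and the vertex \<open>w\<close> straight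
  ahead, so that the walk moves on to \<open>w\<close> and repeats an arc within four steps: if \<open>w\<close> was
  occupied at an earlier time \<open>\<equiv> t + 1 (mod 4)\<close>, the walk leaves \<open>w\<close> at time \<open>t + 1\<close>
  through the same port as then; otherwise it is sent back along \<open>w \<rightarrow> v \<rightarrow> u\<close> and at time
  \<open>t + 3\<close> traverses \<open>u \<rightarrow> v\<close> again, as at time \<open>t - 1\<close>.\<close>

definition switch :: "labeling \<Rightarrow> nat \<Rightarrow> labeling" where
  "switch L t =
     (let u = pos L (t - 1); v = pos L t; w = straight u v
      in L(v := relabel_new u v t, w := relabel_ahead L v w t))"

context
  fixes L :: labeling and t :: nat
  assumes valid_path: "\<forall>s\<le>t. L (pos L s) \<in> local_labelings (pos L s)"
    and valid_ahead: "L (straight (pos L (t - 1)) (pos L t))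
                        \<in> local_labelings (straight (pos L (t - 1)) (pos L t))"
    and t_pos: "1 \<le> t"
    and new: "new_at L t"
begin

abbreviation (input) prev where "prev \<equiv> pos L (t - 1)"
abbreviation (input) cur where "cur \<equiv> pos L t"
abbreviation (input) ahead where "ahead \<equiv> straight prev cur"

lemma switch_geometry:
  shows "cur \<in> nbrs prev" "prev \<in> nbrs cur" "ahead \<in> nbrs cur" "cur \<in> nbrs ahead"
    and "ahead \<noteq> prev" "ahead \<noteq> cur"
proof -
  have "Suc (t - 1) = t" using t_pos by simp
  then show cur: "cur \<in> nbrs prev" using pos_Suc_nbr(1)[OF valid_path[rule_format, of "t - 1"]] by simp
  then show "prev \<in> nbrs cur" by (rule nbrs_sym)
  note dirs = nbrs_by_direction[OF this]
  show "ahead \<in> nbrs cur" "ahead \<noteq> prev" using dirs by simp_all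
  then show "cur \<in> nbrs ahead" "ahead \<noteq> cur" by (simp_all add: nbrs_sym nbr_neq)
qed

lemma switch_cur: "switch L t cur = relabel_new prev cur t"
  using switch_geometry(6) by (simp add: switch_def Let_def)

lemma switch_ahead: "switch L t ahead = relabel_ahead L cur ahead t"
  by (simp add: switch_def Let_def)

lemma switch_other: "x \<noteq> cur \<Longrightarrow> x \<noteq> ahead \<Longrightarrow> switch L t x = L x"
  by (simp add: switch_def Let_def)

lemma switch_cur_valid: "switch L t cur \<in> local_labelings cur"
  unfolding switch_cur relabel_new_def
  using local_labelings_enum[OF nbrs_by_direction[OF switch_geometry(2)] ports_four] .

lemma switch_ahead_valid: "switch L t ahead \<in> local_labelings ahead"
  unfolding switch_ahead relabel_ahead_def Let_def
  using valid_ahead local_labelings_swap[OF valid_ahead switch_geometry(4)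
      out_nbr_in_nbrs[of L ahead, OF valid_ahead port_range]]
  by simp

lemma relabel_ahead_keeps_earlier_exits:
  assumes "s < t" "pos L s = ahead"
  shows "relabel_ahead L cur ahead t (pos L (Suc s)) = L ahead (pos L (Suc s))"
proof (cases "in_phase_before L ahead t")
  case False
  have exit: "L ahead (pos L (Suc s)) = port l s"
    using pos_Suc_nbr(2)[OF valid_path[rule_format, of s]] assms by simp
  have "pos L (Suc s) \<noteq> cur"
  proof
    assume "pos L (Suc s) = cur"
    moreover have "Suc s \<noteq> t" using assms(2) switch_geometry(5) by auto
    then have "pos L (Suc s) \<in> pos L ` {..<t}" using assms(1) by (intro imageI) simp
    ultimately show False using new by (simp add: new_at_def)
  qed
  moreover have "pos L (Suc s) \<noteq> out_nbr L ahead (port l (t + 1))"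
  proof
    assume "pos L (Suc s) = out_nbr L ahead (port l (t + 1))"
    then have "port l s = port l (t + 1)"
      using exit label_out_nbr[of L ahead, OF valid_ahead port_range] by simp
    then show False
      using False assms unfolding in_phase_before_def port_eq_iff by blast
  qed
  ultimately show ?thesis by (simp add: relabel_ahead_def Let_def False)
qed (simp add: relabel_ahead_def)

lemma pos_switch: "s \<le> t \<Longrightarrow> pos (switch L t) s = pos L s"
proof (rule pos_cong)
  fix s assume "s < t"
  then have "pos L s \<in> pos L ` {..<t}" by simp
  then have "pos L s \<noteq> cur" using new unfolding new_at_def by auto
  show "out_nbr (switch L t) (pos L s) (port l s) = out_nbr L (pos L s) (port l s)"
  proof (cases "pos L s = ahead")
    case True
    define y where "y = pos L (Suc s)"
    have y: "y \<in> nbrs ahead" "L ahead y = port l s"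
      using pos_Suc_nbr[OF valid_path[rule_format, of s]] \<open>s < t\<close> unfolding y_def True by simp_all
    have "switch L t ahead y = port l s"
      unfolding switch_ahead y_def relabel_ahead_keeps_earlier_exits[OF \<open>s < t\<close> True]
      using y(2) by (simp only: y_def)
    then have "out_nbr (switch L t) ahead (port l s) = y"
      by (rule out_nbr_eqI[of "switch L t" ahead, OF switch_ahead_valid y(1)])
    moreover have "out_nbr L ahead (port l s) = y"
      using y by (rule out_nbr_eqI[of L ahead, OF valid_ahead])
    ultimately show ?thesis unfolding True by simp
  qed (intro out_nbr_cong switch_other \<open>pos L s \<noteq> cur\<close>)
qed

lemma pos_switch_Suc: "pos (switch L t) (Suc t) = ahead"
proof -
  have "relabel_new prev cur t ahead = port l t" by (simp add: relabel_new_def)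
  then show ?thesis
    using pos_switch[of t] out_nbr_eqI[of "switch L t" cur, OF switch_cur_valid switch_geometry(3)]
    by (simp add: switch_cur)
qed

lemma switch_repeats_arc_in_phase:
  assumes "in_phase_before L ahead t"
  shows "\<not> arcs_distinct (switch L t) (t + 3)"
proof -
  obtain s where s: "s < t" "pos L s = ahead" "s mod 4 = Suc t mod 4"
    using assms unfolding in_phase_before_def by auto
  have "arc (switch L t) s = arc (switch L t) (Suc t)"
    using s pos_switch[of s] pos_switch_Suc port_eq_iff[of l s "Suc t"]
    by (simp add: arc_def pos.simps(2)[of _ s] pos.simps(2)[of _ "Suc t"] del: pos.simps)
  moreover have "s < Suc t" "Suc t \<le> t + 3" using s(1) by simp_all
  ultimately show ?thesis unfolding arcs_distinct_def by blast
qed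

lemma switch_repeats_arc_sent_back:
  assumes "\<not> in_phase_before L ahead t"
  shows "\<not> arcs_distinct (switch L t) (t + 3)"
proof -
  let ?L' = "switch L t"
  have "?L' ahead cur = port l (Suc t)"
    unfolding switch_ahead relabel_ahead_def Let_def
    using assms label_out_nbr[of L ahead, OF valid_ahead port_range] by simp
  then have returns: "pos ?L' (Suc (Suc t)) = cur"
    using pos_switch_Suc out_nbr_eqI[of ?L' ahead, OF switch_ahead_valid switch_geometry(4)]
    by (simp add: pos.simps(2)[of _ "Suc t"] del: pos.simps)
  have "?L' cur prev = port l (Suc (Suc t))"
    using switch_geometry(5) by (simp add: switch_cur relabel_new_def)
  then have "pos ?L' (Suc (Suc (Suc t))) = prev"
    using returns out_nbr_eqI[of ?L' cur, OF switch_cur_valid switch_geometry(2)]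
    by (simp add: pos.simps(2)[of _ "Suc (Suc t)"] del: pos.simps)
  moreover have "pos ?L' (t - 1) = prev" using pos_switch[of "t - 1"] by simp
  moreover have "port l (Suc (Suc (Suc t))) = port l (t - 1)"
  proof -
    have "Suc (Suc (Suc t)) = (t - 1) + 4" using t_pos by simp
    then show ?thesis unfolding port_eq_iff by (simp only: mod_add_self2)
  qed
  ultimately have "arc ?L' (Suc (Suc (Suc t))) = arc ?L' (t - 1)"
    unfolding arc_def pos.simps(2)[of ?L' "Suc (Suc (Suc t))"] pos.simps(2)[of ?L' "t - 1"]
    by (simp del: pos.simps)
  moreover have "t - 1 < Suc (Suc (Suc t))" "Suc (Suc (Suc t)) \<le> t + 3" by simp_all
  ultimately show ?thesis unfolding arcs_distinct_def by metis
qed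

lemma switch_repeats_arc: "\<not> arcs_distinct (switch L t) (t + 3)"
  using switch_repeats_arc_in_phase switch_repeats_arc_sent_back by blast

lemma new_at_switch: "new_at (switch L t) t"
  using new_at_cong[OF pos_switch, of t] new by simp

lemma visited_switch: "visited (switch L t) t = visited L t"
  using visited_cong[OF pos_switch] by simp

lemma discovers_switch:
  assumes "t \<le> B" "visited L t = k" "arcs_distinct L (t - 1)"
  shows "discovers k B (switch L t)"
proof -
  have "arcs_distinct (switch L t) (t - 1)"
    using arcs_distinct_cong[of t "switch L t" L "t - 1", OF pos_switch] assms(3) t_pos by simp
  then show ?thesis
    unfolding discovers_def using assms new_at_switch visited_switch t_pos by blast
qed

lemma not_discovers_clean_switch:
  assumes "visited L t = k"
  shows "\<not> discovers_clean k B (switch L t)"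
proof
  assume "discovers_clean k B (switch L t)"
  then obtain t' where t': "new_at (switch L t) t'" "visited (switch L t) t' = k"
      "arcs_distinct (switch L t) (t' + 3)"
    unfolding discovers_clean_def by blast
  then have "t' = t"
    using new_at_unique[OF t'(1) new_at_switch] visited_switch assms by simp
  then show False using t'(3) switch_repeats_arc by simp
qed

end

section \<open>Discoveries inside a finite window\<close>

text \<open>\<open>discovers k B\<close> and the relabelling at the discovery time only involve the walk up
  to time \<open>B + 4\<close> and its neighbours, all inside the window; restricting labelings to it
  turns the probabilities into counting.\<close>

definition window :: "nat \<Rightarrow> vertex set" where
  "window B = square v0 (int B + 5)"

definition window_labelings :: "nat \<Rightarrow> labeling set" where
  "window_labelings B = PiE (window B) local_labelings"

definition discovering :: "nat \<Rightarrow> nat \<Rightarrow> labeling set" where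
  "discovering k B = {L \<in> window_labelings B. discovers k B L}"

definition discovering_clean :: "nat \<Rightarrow> nat \<Rightarrow> labeling set" where
  "discovering_clean k B = {L \<in> window_labelings B. discovers_clean k B L}"

definition discovery_time :: "nat \<Rightarrow> nat \<Rightarrow> labeling \<Rightarrow> nat" where
  "discovery_time k B L =
     (SOME t. t \<le> B \<and> 1 \<le> t \<and> new_at L t \<and> visited L t = k \<and> arcs_distinct L (t - 1))"

definition switch_at :: "nat \<Rightarrow> nat \<Rightarrow> labeling \<Rightarrow> labeling" where
  "switch_at k B L = switch L (discovery_time k B L)"

lemma finite_window: "finite (window B)"
  by (simp add: window_def finite_square)

lemma finite_window_labelings: "finite (window_labelings B)"
  by (simp add: window_labelings_def finite_PiE finite_window finite_local_labelings)

lemma window_labelings_valid: "L \<in> window_labelings B \<Longrightarrow> x \<in> window B \<Longrightarrow> L x \<in> local_labelings x"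
  by (simp add: window_labelings_def PiE_iff)

lemma discovering_subset: "discovering k B \<subseteq> PiE (window B) local_labelings"
  by (auto simp: discovering_def window_labelings_def)

lemma pos_in_window:
  assumes "L \<in> window_labelings B" "s \<le> B + 5"
  shows "pos L s \<in> square v0 (int s)" "pos L s \<in> window B"
proof -
  have "\<forall>x\<in>square v0 (int B + 5). L x \<in> local_labelings x"
    using window_labelings_valid[OF assms(1)] by (simp add: window_def)
  then show "pos L s \<in> square v0 (int s)" using pos_in_square assms(2) by simp
  then show "pos L s \<in> window B"
    using square_mono[of "int s" "int B + 5" v0] assms(2) by (auto simp: window_def)
qed

lemma discovery_time:
  assumes "L \<in> discovering k B"
  defines "t \<equiv> discovery_time k B L"
  shows "t \<le> B" "1 \<le> t" "new_at L t" "visited L t = k" "arcs_distinct L (t - 1)"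
proof -
  have "\<exists>t. t \<le> B \<and> 1 \<le> t \<and> new_at L t \<and> visited L t = k \<and> arcs_distinct L (t - 1)"
    using assms(1) unfolding discovering_def discovers_def by blast
  from someI_ex[OF this] show "t \<le> B" "1 \<le> t" "new_at L t" "visited L t = k" "arcs_distinct L (t - 1)"
    unfolding t_def discovery_time_def by simp_all
qed

lemma switch_conditions:
  assumes "L \<in> discovering k B"
  defines "t \<equiv> discovery_time k B L"
  shows "\<forall>s\<le>t. L (pos L s) \<in> local_labelings (pos L s)"
    and "pos L t \<in> window B"
    and "straight (pos L (t - 1)) (pos L t) \<in> window B"
    and "L (straight (pos L (t - 1)) (pos L t)) \<in> local_labelings (straight (pos L (t - 1)) (pos L t))"
proof -
  have L: "L \<in> window_labelings B" using assms(1) by (simp add: discovering_def)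
  note t = discovery_time[OF assms(1), folded t_def]
  show valid: "\<forall>s\<le>t. L (pos L s) \<in> local_labelings (pos L s)"
    using window_labelings_valid[OF L pos_in_window(2)[OF L]] t(1) by simp
  show "pos L t \<in> window B" using pos_in_window(2)[OF L] t(1) by simp
  have "Suc (t - 1) = t" using t(2) by simp
  then have "pos L (t - 1) \<in> nbrs (pos L t)"
    using pos_Suc_nbr(1)[OF valid[rule_format, of "t - 1"]] nbrs_sym by simp
  then have "straight (pos L (t - 1)) (pos L t) \<in> nbrs (pos L t)"
    using nbrs_by_direction(1) by blast
  then have "straight (pos L (t - 1)) (pos L t) \<in> square v0 (int t + 1)"
    using nbr_in_square[OF pos_in_window(1)[OF L, of t]] t(1) by simp
  then show ahead: "straight (pos L (t - 1)) (pos L t) \<in> window B"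
    using square_mono[of "int t + 1" "int B + 5" v0] t(1) by (auto simp: window_def)
  show "L (straight (pos L (t - 1)) (pos L t)) \<in> local_labelings (straight (pos L (t - 1)) (pos L t))"
    by (rule window_labelings_valid[OF L ahead])
qed

lemma switch_at_discovering:
  assumes "L \<in> discovering k B"
  shows "switch_at k B L \<in> discovering k B - discovering_clean k B"
proof -
  define t where "t = discovery_time k B L"
  note t = discovery_time[OF assms, folded t_def]
  note c = switch_conditions[OF assms, folded t_def]
  note sw = switch_cur_valid[OF c(1,4) t(2,3)] switch_ahead_valid[OF c(1,4) t(2,3)]
    switch_other[OF c(1,4) t(2,3)]
  have L: "L \<in> window_labelings B" using assms by (simp add: discovering_def)
  have "switch L t \<in> window_labelings B"
    unfolding window_labelings_def
  proof (rule PiE_I)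
    fix x assume "x \<in> window B"
    consider "x = pos L t" | "x = straight (pos L (t - 1)) (pos L t)"
      | "x \<noteq> pos L t" "x \<noteq> straight (pos L (t - 1)) (pos L t)" by blast
    then show "switch L t x \<in> local_labelings x"
    proof cases
      case 3
      then show ?thesis using sw(3)[OF 3] window_labelings_valid[OF L \<open>x \<in> window B\<close>] by simp
    qed (use sw(1,2) in simp_all)
  next
    fix x assume "x \<notin> window B"
    then have "x \<noteq> pos L t" "x \<noteq> straight (pos L (t - 1)) (pos L t)" using c(2,3) by auto
    then show "switch L t x = undefined"
      using sw(3) PiE_arb[OF L[unfolded window_labelings_def] \<open>x \<notin> window B\<close>] by simp
  qed
  then show ?thesis
    using discovers_switch[OF c(1,4) t(2,3) t(1,4,5)] not_discovers_clean_switch[OF c(1,4) t(2,3) t(4)]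
    by (simp add: discovering_def discovering_clean_def switch_at_def t_def)
qed

lemma switch_at_eq_imp_agree:
  assumes "L \<in> discovering k B" "L' \<in> discovering k B" "switch_at k B L = switch_at k B L'"
  defines "t \<equiv> discovery_time k B L'"
  assumes "x \<noteq> pos L' t" "x \<noteq> straight (pos L' (t - 1)) (pos L' t)"
  shows "L x = switch_at k B L' x"
proof -
  define t1 where "t1 = discovery_time k B L"
  note t1 = discovery_time[OF assms(1), folded t1_def]
  note c1 = switch_conditions[OF assms(1), folded t1_def]
  note t = discovery_time[OF assms(2), folded t_def]
  note c = switch_conditions[OF assms(2), folded t_def]
  let ?h = "switch_at k B L'"
  have h1: "?h = switch L t1" using assms(3) by (simp add: switch_at_def t1_def)
  have h: "?h = switch L' t" by (simp add: switch_at_def t_def)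
  have "new_at ?h t1" "visited ?h t1 = k"
    unfolding h1 using new_at_switch[OF c1(1,4) t1(2,3)] visited_switch[OF c1(1,4) t1(2,3)] t1(4)
    by simp_all
  moreover have "new_at ?h t" "visited ?h t = k"
    unfolding h using new_at_switch[OF c(1,4) t(2,3)] visited_switch[OF c(1,4) t(2,3)] t(4)
    by simp_all
  ultimately have "t1 = t" using new_at_unique by simp
  have "pos L s = pos L' s" if "s \<le> t" for s
    using pos_switch[OF c1(1,4) t1(2,3), of s] pos_switch[OF c(1,4) t(2,3), of s] h1 h \<open>t1 = t\<close> that
    by simp
  then have "pos L t = pos L' t" "pos L (t - 1) = pos L' (t - 1)" by simp_all
  then show ?thesis
    using switch_other[OF c1(1,4) t1(2,3)] assms(5,6) h1 \<open>t1 = t\<close> by simp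
qed

lemma card_switch_at_fiber_le:
  assumes "L' \<in> discovering k B"
  shows "card {L \<in> discovering k B. switch_at k B L = switch_at k B L'} \<le> 257 * 257"
proof -
  define t where "t = discovery_time k B L'"
  define a where "a = pos L' t"
  define b where "b = straight (pos L' (t - 1)) (pos L' t)"
  let ?h = "switch_at k B L'"
  let ?G = "{f \<in> PiE (window B) local_labelings. \<forall>x. x \<noteq> a \<longrightarrow> x \<noteq> b \<longrightarrow> f x = ?h x}"
  have "{L \<in> discovering k B. switch_at k B L = ?h} \<subseteq> ?G"
  proof
    fix L assume "L \<in> {L \<in> discovering k B. switch_at k B L = ?h}"
    then have L: "L \<in> discovering k B" "switch_at k B L = ?h" by simp_all
    have "L x = ?h x" if "x \<noteq> a" "x \<noteq> b" for x
      using switch_at_eq_imp_agree[OF L(1) assms L(2)] that unfolding a_def b_def t_def by blast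
    then show "L \<in> ?G" using L(1) by (simp add: discovering_def window_labelings_def)
  qed
  moreover have "?G \<subseteq> window_labelings B" unfolding window_labelings_def by blast
  ultimately have "card {L \<in> discovering k B. switch_at k B L = ?h} \<le> card ?G"
    using finite_window_labelings by (meson card_mono finite_subset)
  also have "\<dots> \<le> Suc (card (local_labelings a)) * Suc (card (local_labelings b))"
    by (rule card_PiE_agree_off2_le) (simp_all add: finite_local_labelings)
  also have "\<dots> \<le> 257 * 257"
    using card_local_labelings_le by (intro mult_le_mono) (simp_all add: Suc_le_mono)
  finally show ?thesis .
qed

lemma card_discovering_le:
  "card (discovering k B) \<le> 66049 * card (discovering k B - discovering_clean k B)"
proof -
  have fin: "finite (discovering k B)"
    using finite_window_labelings by (simp add: discovering_def)
  have "card (discovering k B) \<le> 66049 * card (switch_at k B ` discovering k B)"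
    using card_switch_at_fiber_le by (intro card_le_mult_card_image[OF fin]) auto
  also have "card (switch_at k B ` discovering k B) \<le> card (discovering k B - discovering_clean k B)"
    using fin switch_at_discovering by (intro card_mono) auto
  finally show ?thesis by simp
qed

lemma card_discovering_clean_le:
  "66049 * card (discovering_clean k B) \<le> 66048 * card (discovering k B)"
proof -
  have fin: "finite (discovering k B)"
    using finite_window_labelings by (simp add: discovering_def)
  have sub: "discovering_clean k B \<subseteq> discovering k B"
    using discovers_clean_imp_discovers by (auto simp: discovering_def discovering_clean_def)
  then have "card (discovering k B - discovering_clean k B) = card (discovering k B) - card (discovering_clean k B)"
    "card (discovering_clean k B) \<le> card (discovering k B)"
    using fin by (simp_all add: card_Diff_subset finite_subset card_mono)
  then show ?thesis using card_discovering_le[of k B] by linarith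
qed

lemma card_discovering_add_4_le:
  "1 \<le> k \<Longrightarrow> card (discovering (k + 4) B) \<le> card (discovering_clean k B)"
  using finite_window_labelings discovers_add_4_imp_clean
  by (intro card_mono) (auto simp: discovering_def discovering_clean_def)

lemma card_discovering_decay:
  "66049 ^ j * card (discovering (4 * j + 1) B) \<le> 66048 ^ j * card (window_labelings B)"
proof (induction j)
  case 0
  show ?case using finite_window_labelings by (simp add: discovering_def card_mono)
next
  case (Suc j)
  let ?k = "4 * j + 1"
  have "66049 ^ Suc j * card (discovering (4 * Suc j + 1) B)
      = 66049 ^ j * (66049 * card (discovering (?k + 4) B))" by simp
  also have "\<dots> \<le> 66049 ^ j * (66049 * card (discovering_clean ?k B))"
    using card_discovering_add_4_le[of ?k B] by simp
  also have "\<dots> \<le> 66049 ^ j * (66048 * card (discovering ?k B))"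
    using card_discovering_clean_le[of ?k B] by simp
  also have "\<dots> = 66048 * (66049 ^ j * card (discovering ?k B))" by simp
  also have "\<dots> \<le> 66048 ^ Suc j * card (window_labelings B)" using Suc.IH by simp
  finally show ?case .
qed

end

section \<open>The random labeling\<close>

definition local_measure :: "vertex \<Rightarrow> (vertex \<Rightarrow> nat) measure" where
  "local_measure v = measure_pmf (pmf_of_set (local_labelings v))"

lemma random_labeling_eq_PiM: "random_labeling = PiM UNIV local_measure"
  unfolding random_labeling_def local_measure_def ..

lemma sets_local_measure [simp]: "sets (local_measure v) = UNIV"
  by (simp add: local_measure_def)

lemma space_local_measure [simp]: "space (local_measure v) = UNIV"
  by (simp add: local_measure_def)

interpretation local_measure: product_prob_space local_measure UNIV
  by (simp add: local_measure_def product_prob_space_def product_sigma_finite_def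
      product_prob_space_axioms_def prob_space_measure_pmf prob_space_imp_sigma_finite)

interpretation random_labeling: prob_space random_labeling
  unfolding random_labeling_eq_PiM
  by (rule prob_space_PiM) (simp add: local_measure_def prob_space_measure_pmf)

lemma space_random_labeling [simp]: "space random_labeling = UNIV"
  by (simp add: random_labeling_eq_PiM space_PiM)

lemma measurable_label:
  "(\<lambda>L. g (L x)) \<in> random_labeling \<rightarrow>\<^sub>M count_space UNIV"
proof -
  have "g \<in> local_measure x \<rightarrow>\<^sub>M count_space UNIV"
    by (simp add: measurable_def)
  then show ?thesis unfolding random_labeling_eq_PiM
    by (rule measurable_compose[OF measurable_component_singleton, rotated]) simp
qed

definition cylinder :: "vertex set \<Rightarrow> labeling set \<Rightarrow> labeling set" where
  "cylinder J X = {L. restrict L J \<in> X}"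

lemma cylinder_singleton:
  assumes "g \<in> extensional J"
  shows "cylinder J {g} = prod_emb UNIV local_measure J (PiE J (\<lambda>j. {g j}))"
proof -
  have "restrict L J \<in> PiE J (\<lambda>j. {g j}) \<longleftrightarrow> restrict L J = g" for L
    using assms by (auto simp: PiE_iff extensional_def fun_eq_iff)
  then show ?thesis by (auto simp: cylinder_def prod_emb_def)
qed

lemma measure_cylinder_singleton:
  assumes "finite J" "g \<in> PiE J local_labelings"
  shows "cylinder J {g} \<in> sets random_labeling"
    and "measure random_labeling (cylinder J {g}) = 1 / card (PiE J local_labelings)"
proof -
  have g: "g \<in> extensional J" using assms(2) by (simp add: PiE_iff)
  show "cylinder J {g} \<in> sets random_labeling"
    unfolding cylinder_singleton[OF g] random_labeling_eq_PiM
    using assms(1) by (intro sets_PiM_I) simp_all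
  have "measure random_labeling (cylinder J {g}) = (\<Prod>j\<in>J. measure (local_measure j) {g j})"
    unfolding cylinder_singleton[OF g] random_labeling_eq_PiM
    using assms(1) by (intro local_measure.measure_PiM_emb) simp_all
  also have "\<dots> = (\<Prod>j\<in>J. 1 / card (local_labelings j))"
    using assms(2) finite_local_labelings local_labelings_nonempty
    by (intro prod.cong) (auto simp: local_measure_def measure_pmf_single PiE_iff)
  also have "\<dots> = 1 / card (PiE J local_labelings)"
    using assms(1) by (simp add: card_PiE prod_dividef)
  finally show "measure random_labeling (cylinder J {g}) = 1 / card (PiE J local_labelings)" .
qed

lemma
  assumes "finite J" "X \<subseteq> PiE J local_labelings"
  shows sets_cylinder: "cylinder J X \<in> sets random_labeling"
    and measure_cylinder:
      "measure random_labeling (cylinder J X) = card X / card (PiE J local_labelings)"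
proof -
  have fin: "finite X"
    using assms by (meson finite_PiE finite_local_labelings finite_subset)
  have union: "cylinder J X = (\<Union>g\<in>X. cylinder J {g})" by (auto simp: cylinder_def)
  have sets: "(\<lambda>g. cylinder J {g}) ` X \<subseteq> sets random_labeling"
    using measure_cylinder_singleton(1)[OF assms(1)] assms(2) by blast
  then show "cylinder J X \<in> sets random_labeling"
    unfolding union using fin by (intro sets.finite_UN) auto
  have "measure random_labeling (cylinder J X) = (\<Sum>g\<in>X. measure random_labeling (cylinder J {g}))"
    unfolding union using fin sets
    by (intro random_labeling.finite_measure_finite_Union) (auto simp: disjoint_family_on_def cylinder_def)
  also have "\<dots> = card X / card (PiE J local_labelings)"
    using measure_cylinder_singleton(2)[OF assms(1)] assms(2) by (simp add: subset_iff)
  finally show "measure random_labeling (cylinder J X) = card X / card (PiE J local_labelings)" .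
qed

lemma measurable_basic_walk:
  "(\<lambda>L. basic_walk L v0 l n) \<in> random_labeling \<rightarrow>\<^sub>M count_space UNIV"
proof (induction n)
  case 0
  show ?case using measurable_label[of "\<lambda>f. (v0, THE w. w \<in> nbrs v0 \<and> f w = l)" v0] by simp
next
  case (Suc n)
  define step where "step = (\<lambda>(v, w) (L :: labeling).
      (w, THE u. u \<in> nbrs w \<and> L w u = L v w mod deg w + 1))"
  have step: "(\<lambda>L. step a L) \<in> random_labeling \<rightarrow>\<^sub>M count_space UNIV" for a
  proof -
    obtain v w where a: "a = (v, w)" by (cases a)
    have "(\<lambda>L. (w, THE u. u \<in> nbrs w \<and> L w u = c mod deg w + 1))
        \<in> random_labeling \<rightarrow>\<^sub>M count_space UNIV" for c :: nat
      using measurable_label[of "\<lambda>f. (w, THE u. u \<in> nbrs w \<and> f u = c mod deg w + 1)" w] by simp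
    from measurable_compose_countable[OF this measurable_label[of "\<lambda>f. f w" v]]
    show ?thesis by (simp add: step_def a)
  qed
  have "basic_walk L v0 l (Suc n) = step (basic_walk L v0 l n) L" for L
    by (cases "basic_walk L v0 l n") (simp add: step_def)
  then show ?case using measurable_compose_countable[OF step Suc.IH] by simp
qed

lemma sets_walk_cycles: "{L \<in> space random_labeling. walk_cycles L v0 l} \<in> sets random_labeling"
proof -
  note measurable_basic_walk[measurable]
  have "Measurable.pred random_labeling (\<lambda>L. walk_cycles L v0 l)"
    unfolding walk_cycles_def by measurable
  then show ?thesis by (simp add: pred_def)
qed

definition valid_labelings :: "labeling set" where
  "valid_labelings = {L. \<forall>x. L x \<in> local_labelings x}"

lemma sets_valid_labelings: "valid_labelings \<in> sets random_labeling"
proof -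
  have "Measurable.pred random_labeling (\<lambda>L. \<forall>x. L x \<in> local_labelings x)"
    by (intro pred_intros_countable) (rule measurable_label)
  then show ?thesis by (simp add: pred_def valid_labelings_def)
qed

lemma AE_valid_labelings: "AE L in random_labeling. L \<in> valid_labelings"
  unfolding valid_labelings_def mem_Collect_eq AE_all_countable
proof
  fix x
  have "{L \<in> space random_labeling. L x \<notin> local_labelings x} \<in> sets random_labeling"
    using measurable_label[of "\<lambda>f. f \<notin> local_labelings x" x] by (simp add: pred_def)
  moreover have "emeasure random_labeling {L \<in> space random_labeling. L x \<in> - local_labelings x}
      = emeasure (local_measure x) (- local_labelings x)"
    unfolding random_labeling_eq_PiM by (rule local_measure.emeasure_PiM_Collect_single) simp_all
  moreover have "emeasure (local_measure x) (- local_labelings x) = 0"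
    using finite_local_labelings local_labelings_nonempty
    by (simp add: local_measure_def emeasure_pmf_of_set)
  ultimately show "AE L in random_labeling. L x \<in> local_labelings x"
    by (simp add: AE_iff_measurable[OF _ refl])
qed

context lattice_walk
begin

lemma restrict_window_labelings:
  "L \<in> valid_labelings \<Longrightarrow> restrict L (window B) \<in> window_labelings B"
  by (auto simp: valid_labelings_def window_labelings_def)

lemma discovers_restrict_window:
  assumes "L \<in> valid_labelings"
  shows "discovers k B (restrict L (window B)) = discovers k B L"
proof (rule discovers_cong)
  have "pos L s \<in> window B" if "s \<le> B + 4" for s
  proof -
    have "\<forall>x\<in>square v0 (int s). L x \<in> local_labelings x"
      using assms unfolding valid_labelings_def by blast
    then have "pos L s \<in> square v0 (int s)" using pos_in_square by simp
    then show ?thesis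
      using square_mono[of "int s" "int B + 5" v0] that by (auto simp: window_def)
  qed
  then show "pos (restrict L (window B)) s = pos L s" if "s \<le> B + 4" for s
    using that by (intro pos_cong[of "B + 4"] out_nbr_cong) simp_all
qed

lemma measure_cylinder_discovering_le:
  "measure random_labeling (cylinder (window B) (discovering (4 * j + 1) B)) \<le> (66048 / 66049) ^ j"
proof -
  let ?d = "real (card (discovering (4 * j + 1) B))" and ?w = "real (card (window_labelings B))"
  have "?w > 0"
    using finite_window_labelings local_labelings_nonempty
    by (simp add: window_labelings_def card_gt_0_iff PiE_eq_empty_iff)
  have "real (66049 ^ j * card (discovering (4 * j + 1) B)) \<le> real (66048 ^ j * card (window_labelings B))"
    unfolding of_nat_le_iff by (rule card_discovering_decay)
  then have "66049 ^ j * ?d \<le> 66048 ^ j * ?w" by simp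
  then have "?d / ?w \<le> (66048 / 66049) ^ j"
    using \<open>?w > 0\<close> by (simp add: divide_le_eq power_divide field_simps)
  then show ?thesis
    using measure_cylinder[OF finite_window discovering_subset] by (simp add: window_labelings_def)
qed

definition discovery_event :: "nat \<Rightarrow> nat \<Rightarrow> labeling set" where
  "discovery_event k B = valid_labelings \<inter> cylinder (window B) (discovering k B)"

lemma discovery_event_iff:
  "L \<in> discovery_event k B \<longleftrightarrow> L \<in> valid_labelings \<and> discovers k B L"
  using discovers_restrict_window restrict_window_labelings
  by (auto simp: discovery_event_def cylinder_def discovering_def)

lemma sets_discovery_event: "discovery_event k B \<in> sets random_labeling"
  unfolding discovery_event_def
  using sets_valid_labelings sets_cylinder[OF finite_window discovering_subset] by blast

lemma incseq_discovery_event: "incseq (discovery_event k)"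
  by (rule incseq_SucI)
    (auto simp: discovery_event_iff dest: discovers_mono[OF _ le_SucI[OF order_refl]])

lemma measure_Union_discovery_event_le:
  "measure random_labeling (\<Union>B. discovery_event (4 * j + 1) B) \<le> (66048 / 66049) ^ j"
proof (rule LIMSEQ_le_const2)
  show "(\<lambda>B. measure random_labeling (discovery_event (4 * j + 1) B))
      \<longlonglongrightarrow> measure random_labeling (\<Union>B. discovery_event (4 * j + 1) B)"
    using incseq_discovery_event sets_discovery_event
    by (intro random_labeling.finite_Lim_measure_incseq) auto
  have "measure random_labeling (discovery_event (4 * j + 1) B) \<le> (66048 / 66049) ^ j" for B
    unfolding discovery_event_def
    using random_labeling.finite_measure_mono[OF _ sets_cylinder[OF finite_window discovering_subset]]
      measure_cylinder_discovering_le[of B j] by (meson inf_le2 order.trans)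
  then show "\<exists>N. \<forall>B\<ge>N. measure random_labeling (discovery_event (4 * j + 1) B) \<le> (66048 / 66049) ^ j"
    by blast
qed

lemma AE_not_walk_cycles_imp_discovery_event:
  assumes "l \<in> {1..4}" "1 \<le> k"
  shows "AE L in random_labeling. \<not> walk_cycles L v0 l \<longrightarrow> L \<in> (\<Union>B. discovery_event k B)"
  using AE_valid_labelings
proof eventually_elim
  case (elim L)
  show ?case
  proof
    assume "\<not> walk_cycles L v0 l"
    then have "\<forall>n. arcs_distinct L n"
      using walk_cycles_iff[OF _ assms(1)] elim by (auto simp: valid_labelings_def)
    then obtain B where "discovers k B L" using discovers_if_arcs_distinct assms(2) by blast
    then show "L \<in> (\<Union>B. discovery_event k B)" using elim by (auto simp: discovery_event_iff)
  qed
qed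

lemma measure_not_walk_cycles_le:
  assumes "l \<in> {1..4}"
  shows "measure random_labeling (space random_labeling - {L \<in> space random_labeling. walk_cycles L v0 l})
           \<le> (66048 / 66049) ^ j"
proof -
  have "measure random_labeling (space random_labeling - {L \<in> space random_labeling. walk_cycles L v0 l})
      \<le> measure random_labeling (\<Union>B. discovery_event (4 * j + 1) B)"
    using AE_not_walk_cycles_imp_discovery_event[OF assms, of "4 * j + 1"] sets_discovery_event
    by (intro random_labeling.finite_measure_mono_AE) auto
  then show ?thesis using measure_Union_discovery_event_le[of j] by linarith
qed

lemma measure_walk_cycles:
  assumes "l \<in> {1..4}"
  shows "measure random_labeling {L \<in> space random_labeling. walk_cycles L v0 l} = 1"
proof -
  let ?C = "{L \<in> space random_labeling. walk_cycles L v0 l}"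
  have "(\<lambda>j. (66048 / 66049 :: real) ^ j) \<longlonglongrightarrow> 0" by (rule LIMSEQ_power_zero) simp
  then have "measure random_labeling (space random_labeling - ?C) \<le> 0"
    using measure_not_walk_cycles_le[OF assms] by (intro LIMSEQ_le_const) auto
  moreover have "measure random_labeling (space random_labeling - ?C) = 1 - measure random_labeling ?C"
    by (rule random_labeling.prob_compl[OF sets_walk_cycles])
  moreover have "measure random_labeling ?C \<le> 1" by (rule random_labeling.prob_le_1)
  ultimately show ?thesis by linarith
qed

end

theorem theorem4p1:
  fixes v0 :: vertex and l :: nat
  assumes "l \<in> {1..deg v0}"
  shows "measure random_labeling {L \<in> space random_labeling. walk_cycles L v0 l} = 1"
  using lattice_walk.measure_walk_cycles[of l v0] assms by (simp add: deg_eq_4)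

end
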